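(* There is an absolute constant $c>0$ and a polynomial $q$ such that the following holds. Let $\mathbf T:\{0,1\}^n\to\{0,1\}$ be a size-$s$ stochastic decision tree, $\varepsilon\in(0,1/2)$, $\delta\in(0,1)$, let $S=s^{c/\varepsilon^2}$ and $D=\lceil\log_2(S/\varepsilon)\rceil$. If $m\ge q(n^{D},1/\varepsilon,\log(1/\delta))$ and $X$ is a multiset of $m$ i.i.d. labeled examples $(\mathbf x,\mathbf T(\mathbf x))$ with $\mathbf x$ uniform on $\{0,1\}^n$, then with probability at least $1-\delta$ over the draw of $X$, the tree $T^\star=\textsc{Find}(X,D)$ satisfies $\Pr_{\mathbf x,\mathbf T}[T^\star(\mathbf x)\neq\mathbf T(\mathbf x)]\le\mathrm{opt}_{\mathbf T}+3\varepsilon$.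
   Context: A stochastic decision tree (DT) $\mathbf{T}$ over $\{0,1\}^n$ is a rooted binary tree whose internal nodes are either deterministic nodes, each labeled by a variable $x_i$ ($i\in[n]$) with one outgoing edge followed when $x_i=0$ and one when $x_i=1$, or stochastic nodes, each with two outgoing edges followed with probabilities $p$ and $1-p$ (for a node-specific $p\in[0,1]$, using fresh independent randomness at each node), and whose leaves are labeled $0$ or $1$. On input $x$, $\mathbf{T}(x)$ is the (random) label of the leaf reached. The size of a DT is its number of leaves. $\mu_{\mathbf T}(x)=\Pr[\mathbf T(x)=1]$, $\mathrm{round}(t)=\mathbb 1[t\ge1/2]$, and $\mathrm{opt}_{\mathbf T}=\mathbb E_{\mathbf x}\Pr_{\mathbf T}[\mathbf T(\mathbf x)\ne\mathrm{round}(\mu_{\mathbf T}(\mathbf x))]$. For a multiset $X$ of labeled examples, $(\mathbf x,\mathbf y)\sim X$ denotes a uniform element and $X_{x_i=b}$ the sub-multiset with $x_i=b$. $\textsc{Find}(X,d)$ is defined recursively: (1) if $d=0$, return the constant $c\in\{0,1\}$ minimizing $\Pr_{(\mathbf x,\mathbf y)\sim X}[c\neq\mathbf y]$; (2) otherwise, for each $i\in[n]$ let $T_i$ query $x_i$ at the root with subtrees $\textsc{Find}(X_{x_i=0},d-1)$ (for $x_i=0$) and $\textsc{Find}(X_{x_i=1},d-1)$ (for $x_i=1$); (3) return the $T_i$ minimizing $\Pr_{(\mathbf x,\mathbf y)\sim X}[T_i(\mathbf x)\neq\mathbf y]$. *)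

theory Defs
  imports "HOL-Probability.Probability"
begin

text \<open>SQuery i t0 t1: follow t0 if x_i = 0 (False), t1 if x_i = 1 (True).
  SCoin p t1 t2: follow t1 with probability p and t2 with probability 1 - p.
  Inputs in {0,1}^n are bool lists of length n, variables indexed 0..n-1.\<close>
datatype sdt = SLeaf bool | SQuery nat sdt sdt | SCoin real sdt sdt

fun sdt_size :: "sdt \<Rightarrow> nat" where
  "sdt_size (SLeaf b) = 1"
| "sdt_size (SQuery i a b) = sdt_size a + sdt_size b"
| "sdt_size (SCoin p a b) = sdt_size a + sdt_size b"

fun sdt_wf :: "nat \<Rightarrow> sdt \<Rightarrow> bool" where
  "sdt_wf n (SLeaf b) = True"
| "sdt_wf n (SQuery i a b) = (i < n \<and> sdt_wf n a \<and> sdt_wf n b)"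
| "sdt_wf n (SCoin p a b) = (0 \<le> p \<and> p \<le> 1 \<and> sdt_wf n a \<and> sdt_wf n b)"

fun sdt_run :: "sdt \<Rightarrow> bool list \<Rightarrow> bool pmf" where
  "sdt_run (SLeaf b) x = return_pmf b"
| "sdt_run (SQuery i a b) x = (if x ! i then sdt_run b x else sdt_run a x)"
| "sdt_run (SCoin p a b) x =
     bind_pmf (bernoulli_pmf p) (\<lambda>c. if c then sdt_run a x else sdt_run b x)"

definition sdt_mu :: "sdt \<Rightarrow> bool list \<Rightarrow> real" where
  "sdt_mu T x = pmf (sdt_run T x) True"

definition round_half :: "real \<Rightarrow> bool" where
  "round_half t = (t \<ge> 1/2)"

definition cube :: "nat \<Rightarrow> bool list set" where
  "cube n = {xs. length xs = n}"

definition sdt_opt :: "nat \<Rightarrow> sdt \<Rightarrow> real" where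
  "sdt_opt n T = measure_pmf.expectation (pmf_of_set (cube n))
     (\<lambda>x. measure_pmf.prob (sdt_run T x) {y. y \<noteq> round_half (sdt_mu T x)})"

datatype dt = DLeaf bool | DQuery nat dt dt

fun dt_eval :: "dt \<Rightarrow> bool list \<Rightarrow> bool" where
  "dt_eval (DLeaf b) x = b"
| "dt_eval (DQuery i a b) x = (if x ! i then dt_eval b x else dt_eval a x)"

text \<open>Empirical error Pr_{(x,y)~X}[T x \<noteq> y]; equals 0 on the empty multiset (0/0 = 0).\<close>
definition emp_err :: "(bool list \<times> bool) multiset \<Rightarrow> dt \<Rightarrow> real" where
  "emp_err X T = real (size (filter_mset (\<lambda>(x, y). dt_eval T x \<noteq> y) X)) / real (size X)"

definition restr :: "(bool list \<times> bool) multiset \<Rightarrow> nat \<Rightarrow> bool \<Rightarrow> (bool list \<times> bool) multiset" where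
  "restr X i b = filter_mset (\<lambda>(x, y). x ! i = b) X"

text \<open>find_set n X d is the set of all possible outputs of Find(X,d) over {0,1}^n,
  i.e. over all ways of breaking ties in the argmin steps.\<close>
fun find_set :: "nat \<Rightarrow> (bool list \<times> bool) multiset \<Rightarrow> nat \<Rightarrow> dt set" where
  "find_set n X 0 = {DLeaf c | c. \<forall>c'. emp_err X (DLeaf c) \<le> emp_err X (DLeaf c')}"
| "find_set n X (Suc d) =
     (let C = {DQuery i T0 T1 | i T0 T1. i < n \<and> T0 \<in> find_set n (restr X i False) d
                                        \<and> T1 \<in> find_set n (restr X i True) d}
      in {T \<in> C. \<forall>T' \<in> C. emp_err X T \<le> emp_err X T'})"

definition example_pmf :: "nat \<Rightarrow> sdt \<Rightarrow> (bool list \<times> bool) pmf" where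
  "example_pmf n T = bind_pmf (pmf_of_set (cube n)) (\<lambda>x. map_pmf (\<lambda>y. (x, y)) (sdt_run T x))"

fun iid_pmf :: "'a pmf \<Rightarrow> nat \<Rightarrow> 'a list pmf" where
  "iid_pmf p 0 = return_pmf []"
| "iid_pmf p (Suc m) = bind_pmf p (\<lambda>a. map_pmf (Cons a) (iid_pmf p m))"

definition sample_pmf :: "nat \<Rightarrow> sdt \<Rightarrow> nat \<Rightarrow> (bool list \<times> bool) multiset pmf" where
  "sample_pmf n T m = map_pmf mset (iid_pmf (example_pmf n T) m)"

definition true_err :: "nat \<Rightarrow> sdt \<Rightarrow> dt \<Rightarrow> real" where
  "true_err n T Tstar = measure_pmf.prob (example_pmf n T) {(x, y). dt_eval Tstar x \<noteq> y}"

end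

theory Submission
  imports Defs
begin

text \<open>Find is an exact empirical risk minimiser over the trees of depth at most D, so it suffices
  to show that some depth-D tree is (opt + 2\<epsilon>)-accurate and that, with probability 1 - \<delta>,
  empirical errors of all depth-D trees are simultaneously \<epsilon>/2-accurate.
  For the first part, derandomise T by resolving its coins, and take a threshold vote of
  k = 16/\<epsilon>^2 independent derandomisations: pointwise, a Chernoff bound shows the vote agrees
  with the Bayes predictor round(\<mu>(x)) except with probability exp(-k(\<mu>(x) - 1/2)^2/4), which
  costs at most 4/sqrt k in expected excess error, so some vote is \<epsilon>-optimal. It is a tree with
  at most s^k \<le> S leaves, and pruning it to depth D changes it on at most a fraction S/2^D \<le> \<epsilon>
  of the cube. For the second part, depth-D trees compute at most exp(2 n^(2D) + 2) functions on
  the cube, and a Chernoff and union bound applies.\<close>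

section \<open>Independent samples and Chernoff bounds\<close>

lemma set_pmf_iid_pmf: "L \<in> set_pmf (iid_pmf p m) \<Longrightarrow> length L = m \<and> set L \<subseteq> set_pmf p"
  by (induction m arbitrary: L) fastforce+

lemma map_pmf_map_iid_pmf: "map_pmf (map f) (iid_pmf p m) = iid_pmf (map_pmf f p) m"
proof (induction m)
  case (Suc m)
  show ?case by (simp add: map_bind_pmf bind_map_pmf map_pmf_comp Suc.IH[symmetric])
qed simp

lemma measure_pmf_prob_mono_on_support:
  assumes "\<And>x. x \<in> set_pmf p \<Longrightarrow> x \<in> A \<Longrightarrow> x \<in> B"
  shows "measure_pmf.prob p A \<le> measure_pmf.prob p B"
  by (rule measure_pmf.finite_measure_mono_AE) (auto intro!: AE_pmfI assms)

lemma integrable_measure_pmf_bounded: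
  fixes f :: "'a \<Rightarrow> real"
  assumes "\<And>a. \<bar>f a\<bar> \<le> B" shows "integrable (measure_pmf p) f"
  by (rule measure_pmf.integrable_const_bound[where B=B]) (auto simp: assms)

lemma exists_in_set_pmf_le_expectation:
  fixes f :: "'a \<Rightarrow> real" and p :: "'a pmf"
  assumes "\<And>a. \<bar>f a\<bar> \<le> B"
  shows "\<exists>a\<in>set_pmf p. f a \<le> measure_pmf.expectation p f"
proof (rule ccontr)
  assume "\<not> ?thesis"
  then have lt: "\<And>a. a \<in> set_pmf p \<Longrightarrow> measure_pmf.expectation p f < f a" by force
  have "measure_pmf.expectation p (\<lambda>a. measure_pmf.expectation p f) < measure_pmf.expectation p f"
    by (rule measure_pmf.integral_less_AE_space)
      (auto intro!: AE_pmfI lt integrable_measure_pmf_bounded[where B=B] assms)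
  then show False by simp
qed

lemma nn_integral_exp_sum_list_iid_pmf:
  "(\<integral>\<^sup>+L. ennreal (exp (t * sum_list (map g L))) \<partial>iid_pmf p m) = (\<integral>\<^sup>+a. ennreal (exp (t * g a)) \<partial>p) ^ m"
proof (induction m)
  case 0 then show ?case by simp
next
  case (Suc m)
  have "(\<integral>\<^sup>+L. ennreal (exp (t * sum_list (map g L))) \<partial>iid_pmf p (Suc m))
     = (\<integral>\<^sup>+a. (\<integral>\<^sup>+L. ennreal (exp (t * g a)) * ennreal (exp (t * sum_list (map g L))) \<partial>iid_pmf p m) \<partial>p)"
    by (simp add: distrib_left exp_add ennreal_mult)
  also have "\<dots> = (\<integral>\<^sup>+a. ennreal (exp (t * g a)) * (\<integral>\<^sup>+L. ennreal (exp (t * sum_list (map g L))) \<partial>iid_pmf p m) \<partial>p)"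
    by (subst nn_integral_cmult) auto
  also have "\<dots> = (\<integral>\<^sup>+a. ennreal (exp (t * g a)) \<partial>p) * (\<integral>\<^sup>+a. ennreal (exp (t * g a)) \<partial>p) ^ m"
    by (subst Suc) (subst nn_integral_multc, auto)
  finally show ?case by simp
qed

lemma exp_le_1_plus_plus_square:
  fixes u :: real assumes "\<bar>u\<bar> \<le> 1" shows "exp u \<le> 1 + u + u\<^sup>2"
proof (cases "u \<ge> 0")
  case True then show ?thesis using exp_bound[of u] assms by simp
next
  case False
  have "exp u = inverse (exp (-u))" by (simp add: exp_minus)
  also have "\<dots> \<le> inverse (1 - u)"
    using exp_ge_add_one_self[of "-u"] False by (intro le_imp_inverse_le) auto
  also have "\<dots> \<le> 1 + u + u\<^sup>2"
  proof -
    have "1 \<le> (1 - u) * (1 + u + u\<^sup>2)" using False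
      by (simp add: algebra_simps power2_eq_square)
        (metis mult_nonneg_nonneg neg_0_le_iff_le linorder_not_le less_imp_le mult_le_0_iff)
    then show ?thesis using False by (simp add: field_simps)
  qed
  finally show ?thesis .
qed

lemma nn_integral_exp_le_exp_expectation:
  fixes g :: "'a \<Rightarrow> real" and p :: "'a pmf"
  assumes g: "\<And>a. 0 \<le> g a \<and> g a \<le> 1" and t: "\<bar>t\<bar> \<le> 1"
  shows "(\<integral>\<^sup>+a. ennreal (exp (t * g a)) \<partial>p) \<le> ennreal (exp (t * measure_pmf.expectation p g + t\<^sup>2))"
proof -
  define \<mu> where "\<mu> = measure_pmf.expectation p g"
  have ig: "integrable (measure_pmf p) g" using g by (intro integrable_measure_pmf_bounded[where B=1]) auto
  have \<mu>01: "0 \<le> \<mu>" "\<mu> \<le> 1" unfolding \<mu>_def using g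
    by (auto intro!: integral_nonneg_AE measure_pmf.integral_le_const AE_pmfI ig)
  have ie: "integrable (measure_pmf p) (\<lambda>a. exp (t * g a))"
  proof (rule integrable_measure_pmf_bounded[where B="exp 1"])
    fix a have "t * g a \<le> 1" using g[of a] t by (smt (verit) mult_left_le mult_minus_left abs_le_iff mult_le_one)
    then show "\<bar>exp (t * g a)\<bar> \<le> exp 1" by simp
  qed
  have pointwise: "exp (t * g a) \<le> exp (t * \<mu>) * (1 + t * (g a - \<mu>) + t\<^sup>2)" for a
  proof -
    have "\<bar>g a - \<mu>\<bar> \<le> 1" using g[of a] \<mu>01 by auto
    then have small: "\<bar>t * (g a - \<mu>)\<bar> \<le> 1" and sq: "(t * (g a - \<mu>))\<^sup>2 \<le> t\<^sup>2"
      using t by (auto simp: abs_mult mult_le_one power_mult_distrib abs_square_le_1 mult_left_le)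
    have "exp (t * g a) = exp (t * \<mu>) * exp (t * (g a - \<mu>))" by (simp add: exp_add[symmetric] algebra_simps)
    also have "\<dots> \<le> exp (t * \<mu>) * (1 + t * (g a - \<mu>) + t\<^sup>2)"
      using exp_le_1_plus_plus_square[OF small] sq by (intro mult_left_mono) auto
    finally show ?thesis .
  qed
  have "measure_pmf.expectation p (\<lambda>a. exp (t * g a)) \<le>
        measure_pmf.expectation p (\<lambda>a. exp (t * \<mu>) * (1 + t * (g a - \<mu>) + t\<^sup>2))"
    using pointwise ie ig by (intro integral_mono) auto
  also have "\<dots> = exp (t * \<mu>) * (1 + t\<^sup>2)"
    using ig by (simp add: algebra_simps \<mu>_def)
  also have "\<dots> \<le> exp (t * \<mu>) * exp (t\<^sup>2)"
    using exp_ge_add_one_self[of "t\<^sup>2"] by (intro mult_left_mono) auto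
  finally have "measure_pmf.expectation p (\<lambda>a. exp (t * g a)) \<le> exp (t * \<mu> + t\<^sup>2)"
    by (simp add: exp_add)
  moreover have "(\<integral>\<^sup>+a. ennreal (exp (t * g a)) \<partial>p) = ennreal (measure_pmf.expectation p (\<lambda>a. exp (t * g a)))"
    using ie by (intro nn_integral_eq_integral) auto
  ultimately show ?thesis by (simp add: \<mu>_def ennreal_leI)
qed

lemma iid_sum_upper_tail:
  fixes g :: "'a \<Rightarrow> real" and p :: "'a pmf"
  assumes g: "\<And>a. 0 \<le> g a \<and> g a \<le> 1" and l: "0 \<le> l" "l \<le> 2"
  shows "measure_pmf.prob (iid_pmf p m) {L. sum_list (map g L) \<ge> real m * (measure_pmf.expectation p g + l)}
         \<le> exp (- real m * l\<^sup>2 / 4)"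
proof -
  define \<mu> where "\<mu> = measure_pmf.expectation p g"
  define t where "t = l / 2"
  have t: "0 \<le> t" "\<bar>t\<bar> \<le> 1" using l by (auto simp: t_def)
  define A where "A = {L. sum_list (map g L) \<ge> real m * (\<mu> + l)}"
  have markov: "indicator A L \<le> ennreal (exp (- (t * real m * (\<mu> + l))) * exp (t * sum_list (map g L)))" for L
  proof (cases "L \<in> A")
    case True
    then have "t * real m * (\<mu> + l) \<le> t * sum_list (map g L)" using t unfolding A_def
      by (simp add: mult.assoc mult_left_mono)
    then have "1 \<le> exp (- (t * real m * (\<mu> + l))) * exp (t * sum_list (map g L))"
      by (simp add: exp_add[symmetric])
    then show ?thesis using True by (simp add: ennreal_ge_1)
  qed simp
  have "emeasure (measure_pmf (iid_pmf p m)) A = (\<integral>\<^sup>+L. indicator A L \<partial>iid_pmf p m)" by simp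
  also have "\<dots> \<le> (\<integral>\<^sup>+L. ennreal (exp (- (t * real m * (\<mu> + l)))) * ennreal (exp (t * sum_list (map g L))) \<partial>iid_pmf p m)"
    using markov by (intro nn_integral_mono) (simp add: ennreal_mult)
  also have "\<dots> = ennreal (exp (- (t * real m * (\<mu> + l)))) * (\<integral>\<^sup>+a. ennreal (exp (t * g a)) \<partial>p) ^ m"
    by (subst nn_integral_cmult) (auto simp: nn_integral_exp_sum_list_iid_pmf)
  also have "\<dots> \<le> ennreal (exp (- (t * real m * (\<mu> + l)))) * ennreal (exp (t * \<mu> + t\<^sup>2)) ^ m"
    using nn_integral_exp_le_exp_expectation[OF g t(2), of p]
    by (intro mult_left_mono power_mono) (auto simp: \<mu>_def)
  also have "\<dots> = ennreal (exp (- (t * real m * (\<mu> + l))) * exp (t * \<mu> + t\<^sup>2) ^ m)"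
    by (simp add: ennreal_mult ennreal_power)
  also have "exp (- (t * real m * (\<mu> + l))) * exp (t * \<mu> + t\<^sup>2) ^ m = exp (- real m * l\<^sup>2 / 4)"
    by (simp add: exp_of_nat_mult[symmetric] exp_add[symmetric] t_def power2_eq_square field_simps)
  finally have "ennreal (measure_pmf.prob (iid_pmf p m) A) \<le> ennreal (exp (- real m * l\<^sup>2 / 4))"
    by (simp add: measure_pmf.emeasure_eq_measure)
  then show ?thesis by (simp add: A_def \<mu>_def)
qed

lemma iid_sum_lower_tail:
  fixes g :: "'a \<Rightarrow> real" and p :: "'a pmf"
  assumes g: "\<And>a. 0 \<le> g a \<and> g a \<le> 1" and l: "0 \<le> l" "l \<le> 2"
  shows "measure_pmf.prob (iid_pmf p m) {L. sum_list (map g L) \<le> real m * (measure_pmf.expectation p g - l)}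
         \<le> exp (- real m * l\<^sup>2 / 4)"
proof -
  have "integrable (measure_pmf p) g" using g by (intro integrable_measure_pmf_bounded[where B=1]) auto
  then have E1: "measure_pmf.expectation p (\<lambda>a. 1 - g a) = 1 - measure_pmf.expectation p g"
    by simp
  have sum_complement: "sum_list (map (\<lambda>a. 1 - g a) L) = real (length L) - sum_list (map g L)" for L
    by (induction L) auto
  have "measure_pmf.prob (iid_pmf p m) {L. sum_list (map g L) \<le> real m * (measure_pmf.expectation p g - l)}
     \<le> measure_pmf.prob (iid_pmf p m)
          {L. sum_list (map (\<lambda>a. 1 - g a) L) \<ge> real m * (measure_pmf.expectation p (\<lambda>a. 1 - g a) + l)}"
    by (rule measure_pmf_prob_mono_on_support)
      (auto simp: sum_complement E1 algebra_simps dest!: set_pmf_iid_pmf)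
  also have "\<dots> \<le> exp (- real m * l\<^sup>2 / 4)"
    by (rule iid_sum_upper_tail) (use g l in auto)
  finally show ?thesis .
qed

lemma iid_mean_deviation:
  fixes g :: "'a \<Rightarrow> real" and p :: "'a pmf"
  assumes g: "\<And>a. 0 \<le> g a \<and> g a \<le> 1" and l: "0 \<le> l" "l \<le> 2" and m: "m > 0"
  shows "measure_pmf.prob (iid_pmf p m) {L. l < \<bar>sum_list (map g L) / real m - measure_pmf.expectation p g\<bar>}
         \<le> 2 * exp (- real m * l\<^sup>2 / 4)"
proof -
  define \<mu> where "\<mu> = measure_pmf.expectation p g"
  let ?U = "{L. sum_list (map g L) \<ge> real m * (\<mu> + l)}" and ?D = "{L. sum_list (map g L) \<le> real m * (\<mu> - l)}"
  have "measure_pmf.prob (iid_pmf p m) {L. l < \<bar>sum_list (map g L) / real m - \<mu>\<bar>}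
     \<le> measure_pmf.prob (iid_pmf p m) (?U \<union> ?D)"
    using m by (intro measure_pmf_prob_mono_on_support) (auto simp: abs_if field_simps split: if_splits)
  also have "\<dots> \<le> measure_pmf.prob (iid_pmf p m) ?U + measure_pmf.prob (iid_pmf p m) ?D"
    by (rule measure_subadditive) (auto simp: measure_pmf.emeasure_eq_measure)
  also have "\<dots> \<le> exp (- real m * l\<^sup>2 / 4) + exp (- real m * l\<^sup>2 / 4)"
    using iid_sum_upper_tail[OF g l] iid_sum_lower_tail[OF g l] unfolding \<mu>_def by (intro add_mono) auto
  finally show ?thesis by (simp add: \<mu>_def)
qed

section \<open>Deterministic trees and the behaviour of Find\<close>

fun dt_depth :: "dt \<Rightarrow> nat" where
  "dt_depth (DLeaf b) = 0"
| "dt_depth (DQuery i a b) = Suc (max (dt_depth a) (dt_depth b))"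

fun dt_wf :: "nat \<Rightarrow> dt \<Rightarrow> bool" where
  "dt_wf n (DLeaf b) = True"
| "dt_wf n (DQuery i a b) = (i < n \<and> dt_wf n a \<and> dt_wf n b)"

fun dt_leaves :: "dt \<Rightarrow> nat" where
  "dt_leaves (DLeaf b) = 1"
| "dt_leaves (DQuery i a b) = dt_leaves a + dt_leaves b"

lemma dt_leaves_pos: "dt_leaves t \<ge> 1"
  by (induction t) auto

definition mistakes :: "(bool list \<times> bool) multiset \<Rightarrow> dt \<Rightarrow> nat" where
  "mistakes X h = size (filter_mset (\<lambda>(x, y). dt_eval h x \<noteq> y) X)"

lemma emp_err_eq_mistakes: "emp_err X h = real (mistakes X h) / real (size X)"
  by (simp add: emp_err_def mistakes_def)

lemma mistakes_cong: "(\<And>x. dt_eval a x = dt_eval b x) \<Longrightarrow> mistakes X a = mistakes X b"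
  by (simp add: mistakes_def)

lemma mistakes_DQuery: "mistakes X (DQuery i a b) = mistakes (restr X i False) a + mistakes (restr X i True) b"
proof -
  let ?P = "\<lambda>(x, y). dt_eval (DQuery i a b) x \<noteq> y"
  have "filter_mset ?P X = filter_mset (\<lambda>z. fst z ! i) (filter_mset ?P X) + filter_mset (\<lambda>z. \<not> fst z ! i) (filter_mset ?P X)"
    by (rule multiset_partition)
  also have "filter_mset (\<lambda>z. fst z ! i) (filter_mset ?P X) = filter_mset (\<lambda>(x, y). dt_eval b x \<noteq> y) (restr X i True)"
    unfolding restr_def filter_filter_mset by (rule filter_mset_cong) auto
  also have "filter_mset (\<lambda>z. \<not> fst z ! i) (filter_mset ?P X) = filter_mset (\<lambda>(x, y). dt_eval a x \<noteq> y) (restr X i False)"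
    unfolding restr_def filter_filter_mset by (rule filter_mset_cong) auto
  finally show ?thesis unfolding mistakes_def by simp
qed

lemma mistakes_le_if_emp_err_le: "emp_err X a \<le> emp_err X b \<Longrightarrow> mistakes X a \<le> mistakes X b"
  by (cases "size X = 0") (auto simp: mistakes_def emp_err_eq_mistakes divide_right_mono_neg field_simps)

definition bounded_dts :: "nat \<Rightarrow> nat \<Rightarrow> dt set" where
  "bounded_dts n d = {h. dt_depth h \<le> d \<and> dt_wf n h}"

lemma bounded_dts_0: "bounded_dts n 0 = range DLeaf"
  by (auto simp: bounded_dts_def elim: dt_depth.elims)

lemma bounded_dts_Suc:
  "bounded_dts n (Suc d) = range DLeaf \<union> (\<lambda>(i, a, b). DQuery i a b) ` ({..<n} \<times> bounded_dts n d \<times> bounded_dts n d)"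
proof (intro equalityI subsetI)
  fix h assume h: "h \<in> bounded_dts n (Suc d)"
  show "h \<in> range DLeaf \<union> (\<lambda>(i, a, b). DQuery i a b) ` ({..<n} \<times> bounded_dts n d \<times> bounded_dts n d)"
  proof (cases h)
    case (DQuery i a b)
    then show ?thesis using h by (auto simp: bounded_dts_def intro!: image_eqI[where x="(i, a, b)"])
  qed auto
qed (auto simp: bounded_dts_def)

lemma range_DLeaf: "range DLeaf = {DLeaf True, DLeaf False}"
  by (auto intro: bool.exhaust)

lemma finite_card_bounded_dts:
  "finite (bounded_dts n d) \<and> card (bounded_dts n d) \<le> (n + 2) ^ (2 ^ (d + 1) - 1)"
proof (induction d)
  case 0
  then show ?case by (simp add: bounded_dts_0 range_DLeaf)
next
  case (Suc d)
  define N where "N = card (bounded_dts n d)"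
  have "DLeaf True \<in> bounded_dts n d" by (simp add: bounded_dts_def)
  then have "1 \<le> N" using Suc by (auto simp: N_def Suc_le_eq card_gt_0_iff)
  then have "1 \<le> N * N" by simp
  have "card (bounded_dts n (Suc d))
        \<le> card (range DLeaf) + card ((\<lambda>(i, a, b). DQuery i a b) ` ({..<n} \<times> bounded_dts n d \<times> bounded_dts n d))"
    unfolding bounded_dts_Suc by (rule card_Un_le)
  also have "\<dots> \<le> 2 + card ({..<n} \<times> bounded_dts n d \<times> bounded_dts n d)"
    using Suc card_image_le[of "{..<n} \<times> bounded_dts n d \<times> bounded_dts n d" "\<lambda>(i, a, b). DQuery i a b"]
    by (simp add: range_DLeaf)
  also have "\<dots> = 2 + n * (N * N)" by (simp add: card_cartesian_product N_def)
  also have "\<dots> \<le> (n + 2) * (N * N)"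
    using \<open>1 \<le> N * N\<close> unfolding add_mult_distrib by linarith
  also have "\<dots> \<le> (n + 2) * ((n + 2) ^ (2 ^ (d + 1) - 1) * (n + 2) ^ (2 ^ (d + 1) - 1))"
    using Suc N_def by (intro mult_left_mono mult_mono) auto
  also have "\<dots> = (n + 2) ^ (2 ^ (Suc d + 1) - 1)"
  proof -
    have "2 ^ (Suc d + 1) - 1 = Suc ((2 ^ (d + 1) - 1) + (2 ^ (d + 1) - 1))"
    proof -
      have "(2::nat) ^ d \<ge> 1" by simp
      moreover have "(2::nat) ^ (Suc d + 1) = 4 * 2 ^ d" "(2::nat) ^ (d + 1) = 2 * 2 ^ d" by simp_all
      ultimately show ?thesis by arith
    qed
    then show ?thesis by (simp only: power_Suc power_add)
  qed
  finally show ?case using Suc by (simp add: bounded_dts_Suc range_DLeaf)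
qed

definition find_candidates :: "nat \<Rightarrow> (bool list \<times> bool) multiset \<Rightarrow> nat \<Rightarrow> dt set" where
  "find_candidates n X d = {DQuery i T0 T1 | i T0 T1. i < n \<and> T0 \<in> find_set n (restr X i False) d
                                                  \<and> T1 \<in> find_set n (restr X i True) d}"

lemma find_set_Suc:
  "find_set n X (Suc d) = {T \<in> find_candidates n X d. \<forall>T' \<in> find_candidates n X d. emp_err X T \<le> emp_err X T'}"
  by (simp add: find_candidates_def Let_def)

lemma find_set_bounded_dts: "T \<in> find_set n X d \<Longrightarrow> T \<in> bounded_dts n d"
proof (induction d arbitrary: X T)
  case 0 then show ?case by (auto simp: bounded_dts_def)
next
  case (Suc d)
  then obtain i T0 T1 where "T = DQuery i T0 T1" "i < n"
    "T0 \<in> find_set n (restr X i False) d" "T1 \<in> find_set n (restr X i True) d"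
    by (auto simp: find_set_Suc find_candidates_def)
  then show ?case using Suc.IH by (fastforce simp: bounded_dts_def)
qed

lemma find_set_nonempty: "n \<ge> 1 \<Longrightarrow> find_set n X d \<noteq> {}"
proof (induction d arbitrary: X)
  case 0
  let ?c = "emp_err X (DLeaf True) \<le> emp_err X (DLeaf False)"
  have "emp_err X (DLeaf ?c) \<le> emp_err X (DLeaf c')" for c' by (cases c'; cases ?c) auto
  then have "DLeaf ?c \<in> find_set n X 0" by simp
  then show ?case by blast
next
  case (Suc d)
  let ?C = "find_candidates n X d"
  have "?C \<subseteq> bounded_dts n (Suc d)"
    by (auto simp: find_candidates_def bounded_dts_def dest!: find_set_bounded_dts)
  then have fin: "finite ?C" using finite_subset finite_card_bounded_dts by blast
  obtain T0 T1 where "T0 \<in> find_set n (restr X 0 False) d" "T1 \<in> find_set n (restr X 0 True) d"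
    using Suc by blast
  then have "DQuery 0 T0 T1 \<in> ?C" using Suc.prems by (auto simp: find_candidates_def)
  then have ne: "?C \<noteq> {}" by blast
  have "arg_min_on (emp_err X) ?C \<in> find_set n X (Suc d)"
    using arg_min_if_finite(1)[OF fin ne] arg_min_least[OF fin ne] unfolding find_set_Suc by blast
  then show ?case by blast
qed

lemma find_set_optimal:
  assumes "n \<ge> 1"
  shows "T \<in> find_set n X d \<Longrightarrow> h \<in> bounded_dts n d \<Longrightarrow> mistakes X T \<le> mistakes X h"
proof (induction d arbitrary: X T h)
  case 0
  then obtain c where "T = DLeaf c" "\<forall>c'. emp_err X (DLeaf c) \<le> emp_err X (DLeaf c')" by auto
  moreover obtain b where "h = DLeaf b" using 0 by (auto simp: bounded_dts_0)
  ultimately show ?case by (auto intro: mistakes_le_if_emp_err_le)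
next
  case (Suc d)
  have split_bound: "mistakes X T \<le> mistakes (restr X i False) a + mistakes (restr X i True) b"
    if "i < n" "a \<in> bounded_dts n d" "b \<in> bounded_dts n d" for i a b
  proof -
    obtain T0 T1 where T01: "T0 \<in> find_set n (restr X i False) d" "T1 \<in> find_set n (restr X i True) d"
      using find_set_nonempty[OF assms] by blast
    then have "DQuery i T0 T1 \<in> find_candidates n X d" using that by (auto simp: find_candidates_def)
    then have "emp_err X T \<le> emp_err X (DQuery i T0 T1)" using Suc.prems(1) unfolding find_set_Suc by blast
    then have "mistakes X T \<le> mistakes X (DQuery i T0 T1)" by (rule mistakes_le_if_emp_err_le)
    also have "\<dots> = mistakes (restr X i False) T0 + mistakes (restr X i True) T1" by (rule mistakes_DQuery)
    also have "\<dots> \<le> mistakes (restr X i False) a + mistakes (restr X i True) b"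
      using Suc.IH[OF T01(1) that(2)] Suc.IH[OF T01(2) that(3)] by simp
    finally show ?thesis .
  qed
  show ?case
  proof (cases h)
    case (DLeaf b)
    have "mistakes X T \<le> mistakes (restr X 0 False) (DLeaf b) + mistakes (restr X 0 True) (DLeaf b)"
      using assms by (intro split_bound) (auto simp: bounded_dts_def)
    also have "\<dots> = mistakes X (DQuery 0 (DLeaf b) (DLeaf b))" by (rule mistakes_DQuery[symmetric])
    also have "\<dots> = mistakes X h" using DLeaf by (intro mistakes_cong) auto
    finally show ?thesis .
  next
    case (DQuery i a b)
    then show ?thesis
      using Suc.prems split_bound[of i a b] mistakes_DQuery[of X i a b] by (auto simp: bounded_dts_def)
  qed
qed

section \<open>Pruning a tree to bounded depth\<close>

text \<open>The partial assignment \<rho> records the variables queried on the current path, so that a repeated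
  query is resolved instead of counted towards the depth.\<close>
fun dt_prune :: "(nat \<Rightarrow> bool option) \<Rightarrow> nat \<Rightarrow> dt \<Rightarrow> dt" where
  "dt_prune \<rho> d (DLeaf b) = DLeaf b"
| "dt_prune \<rho> d (DQuery i a b) = (case \<rho> i of
      Some v \<Rightarrow> (if v then dt_prune \<rho> d b else dt_prune \<rho> d a)
    | None \<Rightarrow> (case d of 0 \<Rightarrow> DLeaf False
               | Suc d' \<Rightarrow> DQuery i (dt_prune (\<rho>(i \<mapsto> False)) d' a) (dt_prune (\<rho>(i \<mapsto> True)) d' b)))"

lemma dt_depth_prune: "dt_depth (dt_prune \<rho> d t) \<le> d"
  by (induction t arbitrary: \<rho> d) (auto split: option.splits nat.splits)

lemma dt_wf_prune: "dt_wf n t \<Longrightarrow> dt_wf n (dt_prune \<rho> d t)"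
  by (induction t arbitrary: \<rho> d) (auto split: option.splits nat.splits)

definition subcube :: "nat \<Rightarrow> (nat \<Rightarrow> bool option) \<Rightarrow> bool list set" where
  "subcube n \<rho> = {x \<in> cube n. \<forall>i v. \<rho> i = Some v \<longrightarrow> x ! i = v}"

lemma cube_eq_lists: "cube n = {xs. set xs \<subseteq> (UNIV::bool set) \<and> length xs = n}"
  by (auto simp: cube_def)

lemma finite_cube: "finite (cube n)"
  using finite_lists_length_eq[of "UNIV::bool set" n] by (simp add: cube_eq_lists)

lemma card_cube: "card (cube n) = 2 ^ n"
  using card_lists_length_eq[of "UNIV::bool set" n] by (simp add: cube_eq_lists)

lemma cube_nonempty: "cube n \<noteq> {}"
  by (auto simp: cube_def intro: exI[of _ "replicate n False"])

lemma finite_subcube: "finite (subcube n \<rho>)"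
  unfolding subcube_def using finite_cube by auto

lemma subcube_upd_nth: "x \<in> subcube n (\<rho>(i \<mapsto> v)) \<Longrightarrow> x ! i = v"
  unfolding subcube_def by (metis (mono_tags, lifting) mem_Collect_eq fun_upd_same)

lemma card_subcube_upd:
  assumes "i < n" "\<rho> i = None"
  shows "real (card (subcube n (\<rho>(i \<mapsto> v)))) = real (card (subcube n \<rho>)) / 2"
proof -
  define flip where "flip x = x[i := \<not> x ! i]" for x :: "bool list"
  have flip_flip: "flip (flip x) = x" if "x \<in> cube n" for x using that assms by (simp add: flip_def cube_def)
  have "bij_betw flip (subcube n (\<rho>(i \<mapsto> False))) (subcube n (\<rho>(i \<mapsto> True)))"
  proof (rule bij_betw_byWitness[where f'=flip])
    show "\<forall>x\<in>subcube n (\<rho>(i \<mapsto> False)). flip (flip x) = x" "\<forall>x\<in>subcube n (\<rho>(i \<mapsto> True)). flip (flip x) = x"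
      using flip_flip by (auto simp: subcube_def)
    show "flip ` subcube n (\<rho>(i \<mapsto> False)) \<subseteq> subcube n (\<rho>(i \<mapsto> True))"
      "flip ` subcube n (\<rho>(i \<mapsto> True)) \<subseteq> subcube n (\<rho>(i \<mapsto> False))"
      using assms by (auto simp: flip_def subcube_def cube_def nth_list_update)
  qed
  then have halves: "card (subcube n (\<rho>(i \<mapsto> False))) = card (subcube n (\<rho>(i \<mapsto> True)))"
    by (rule bij_betw_same_card)
  have "subcube n \<rho> = subcube n (\<rho>(i \<mapsto> False)) \<union> subcube n (\<rho>(i \<mapsto> True))"
    using assms by (auto simp: subcube_def)
  moreover have "subcube n (\<rho>(i \<mapsto> False)) \<inter> subcube n (\<rho>(i \<mapsto> True)) = {}"
    using subcube_upd_nth[of _ n \<rho> i False] subcube_upd_nth[of _ n \<rho> i True] by blast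
  ultimately have "card (subcube n \<rho>) = card (subcube n (\<rho>(i \<mapsto> False))) + card (subcube n (\<rho>(i \<mapsto> True)))"
    using finite_subcube by (simp add: card_Un_disjoint)
  then show ?thesis using halves by (cases v) simp_all
qed

lemma card_prune_disagreement:
  "dt_wf n t \<Longrightarrow> real (card {x \<in> subcube n \<rho>. dt_eval (dt_prune \<rho> d t) x \<noteq> dt_eval t x})
     \<le> real (dt_leaves t) * real (card (subcube n \<rho>)) / 2 ^ d"
proof (induction t arbitrary: \<rho> d)
  case (DLeaf b) then show ?case by simp
next
  case (DQuery i a b)
  let ?E = "{x \<in> subcube n \<rho>. dt_eval (dt_prune \<rho> d (DQuery i a b)) x \<noteq> dt_eval (DQuery i a b) x}"
  show ?case
  proof (cases "\<rho> i")
    case (Some v)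
    let ?c = "if v then b else a"
    have "?E = {x \<in> subcube n \<rho>. dt_eval (dt_prune \<rho> d ?c) x \<noteq> dt_eval ?c x}"
      using Some by (auto simp: subcube_def)
    then have "real (card ?E) \<le> real (dt_leaves ?c) * real (card (subcube n \<rho>)) / 2 ^ d"
      using DQuery by auto
    also have "\<dots> \<le> real (dt_leaves (DQuery i a b)) * real (card (subcube n \<rho>)) / 2 ^ d"
      by (intro divide_right_mono mult_right_mono) auto
    finally show ?thesis .
  next
    case None
    show ?thesis
    proof (cases d)
      case 0
      have "real (card ?E) \<le> real (card (subcube n \<rho>))"
        using finite_subcube by (intro of_nat_mono card_mono) auto
      also have "\<dots> \<le> real (dt_leaves (DQuery i a b)) * real (card (subcube n \<rho>))"
        using dt_leaves_pos[of a] by (simp add: mult_le_cancel_right1)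
      finally show ?thesis using 0 by simp
    next
      case (Suc d')
      have i: "i < n" using DQuery.prems by simp
      let ?A = "{x \<in> subcube n (\<rho>(i \<mapsto> False)). dt_eval (dt_prune (\<rho>(i \<mapsto> False)) d' a) x \<noteq> dt_eval a x}"
      let ?B = "{x \<in> subcube n (\<rho>(i \<mapsto> True)). dt_eval (dt_prune (\<rho>(i \<mapsto> True)) d' b) x \<noteq> dt_eval b x}"
      have "?E \<subseteq> ?A \<union> ?B"
        using None Suc by (auto simp: subcube_def)
      then have "real (card ?E) \<le> real (card ?A) + real (card ?B)"
        using finite_subcube card_Un_le[of ?A ?B] card_mono[of "?A \<union> ?B" ?E] by simp
      also have "\<dots> \<le> real (dt_leaves a) * real (card (subcube n (\<rho>(i \<mapsto> False)))) / 2 ^ d'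
                    + real (dt_leaves b) * real (card (subcube n (\<rho>(i \<mapsto> True)))) / 2 ^ d'"
        using DQuery.IH DQuery.prems by (intro add_mono) auto
      also have "\<dots> = real (dt_leaves (DQuery i a b)) * real (card (subcube n \<rho>)) / 2 ^ d"
        by (simp add: card_subcube_upd[of i n \<rho>, OF i None] Suc field_simps)
      finally show ?thesis .
    qed
  qed
qed

lemma exists_shallow_approximation:
  assumes "dt_wf n t"
  obtains t' where "t' \<in> bounded_dts n d"
    "real (card {x \<in> cube n. dt_eval t' x \<noteq> dt_eval t x}) \<le> real (dt_leaves t) * 2 ^ n / 2 ^ d"
proof
  show "dt_prune Map.empty d t \<in> bounded_dts n d"
    using dt_depth_prune dt_wf_prune assms by (simp add: bounded_dts_def)
  have "subcube n Map.empty = cube n" by (simp add: subcube_def)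
  then show "real (card {x \<in> cube n. dt_eval (dt_prune Map.empty d t) x \<noteq> dt_eval t x})
             \<le> real (dt_leaves t) * 2 ^ n / 2 ^ d"
    using card_prune_disagreement[OF assms, of Map.empty d] by (simp add: card_cube)
qed

definition pointwise_err :: "sdt \<Rightarrow> (bool list \<Rightarrow> bool) \<Rightarrow> bool list \<Rightarrow> real" where
  "pointwise_err T f x = measure_pmf.prob (sdt_run T x) {y. y \<noteq> f x}"

definition sdt_bayes :: "sdt \<Rightarrow> bool list \<Rightarrow> bool" where
  "sdt_bayes T x = round_half (sdt_mu T x)"

lemma sdt_mu_bounds: "0 \<le> sdt_mu T x \<and> sdt_mu T x \<le> 1"
  by (simp add: sdt_mu_def pmf_le_1)

lemma pointwise_err_eq: "pointwise_err T f x = (if f x then 1 - sdt_mu T x else sdt_mu T x)"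
proof -
  have "{y. y \<noteq> f x} = {\<not> f x}" by auto
  then show ?thesis by (simp add: pointwise_err_def measure_pmf_single pmf_False_conv_True sdt_mu_def)
qed

lemma pointwise_err_bounds: "0 \<le> pointwise_err T f x \<and> pointwise_err T f x \<le> 1"
  using sdt_mu_bounds[of T x] by (simp add: pointwise_err_eq)

lemma pointwise_err_cong: "f x = f' x \<Longrightarrow> pointwise_err T f x = pointwise_err T f' x"
  by (simp add: pointwise_err_def)

lemma pointwise_err_excess:
  "pointwise_err T f x - pointwise_err T (sdt_bayes T) x
     = (if f x = sdt_bayes T x then 0 else \<bar>2 * sdt_mu T x - 1\<bar>)"
  using sdt_mu_bounds[of T x] by (auto simp: pointwise_err_eq sdt_bayes_def round_half_def)

lemma prob_example_pmf_mispredict: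
  "measure_pmf.prob (example_pmf n T) {(x, y). f x \<noteq> y} = (\<Sum>x\<in>cube n. pointwise_err T f x) / 2 ^ n"
proof -
  let ?A = "{(x, y). f x \<noteq> y}"
  have "emeasure (measure_pmf (example_pmf n T)) ?A
     = (\<integral>\<^sup>+x. emeasure (measure_pmf (map_pmf (\<lambda>y. (x, y)) (sdt_run T x))) ?A \<partial>pmf_of_set (cube n))"
    by (simp add: example_pmf_def)
  also have "\<dots> = (\<integral>\<^sup>+x. ennreal (pointwise_err T f x) \<partial>pmf_of_set (cube n))"
  proof (intro nn_integral_cong)
    fix x
    have "(\<lambda>y. (x, y)) -` ?A = {y. y \<noteq> f x}" by auto
    then show "emeasure (measure_pmf (map_pmf (\<lambda>y. (x, y)) (sdt_run T x))) ?A = ennreal (pointwise_err T f x)"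
      by (simp add: pointwise_err_def measure_pmf.emeasure_eq_measure)
  qed
  also have "\<dots> = (\<Sum>x\<in>cube n. ennreal (pointwise_err T f x)) / card (cube n)"
    using finite_cube cube_nonempty by (simp add: nn_integral_pmf_of_set)
  also have "\<dots> = ennreal ((\<Sum>x\<in>cube n. pointwise_err T f x) / 2 ^ n)"
    using pointwise_err_bounds
    by (simp add: card_cube sum_nonneg divide_ennreal[symmetric] ennreal_power[symmetric])
  finally show ?thesis
    by (simp add: measure_pmf.emeasure_eq_measure pointwise_err_bounds sum_nonneg)
qed

lemma true_err_eq_sum: "true_err n T h = (\<Sum>x\<in>cube n. pointwise_err T (dt_eval h) x) / 2 ^ n"
  unfolding true_err_def by (rule prob_example_pmf_mispredict)

lemma sdt_opt_eq_sum: "sdt_opt n T = (\<Sum>x\<in>cube n. pointwise_err T (sdt_bayes T) x) / 2 ^ n"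
  unfolding sdt_opt_def pointwise_err_def sdt_bayes_def
  using finite_cube cube_nonempty by (simp add: integral_pmf_of_set card_cube)

lemma true_err_le_disagreement:
  "true_err n T h' \<le> true_err n T h + real (card {x \<in> cube n. dt_eval h' x \<noteq> dt_eval h x}) / 2 ^ n"
proof -
  let ?P = "\<lambda>x. dt_eval h' x \<noteq> dt_eval h x"
  have "(\<Sum>x\<in>cube n. pointwise_err T (dt_eval h') x)
        \<le> (\<Sum>x\<in>cube n. pointwise_err T (dt_eval h) x + (if ?P x then 1 else 0))"
  proof (intro sum_mono)
    fix x
    show "pointwise_err T (dt_eval h') x \<le> pointwise_err T (dt_eval h) x + (if ?P x then 1 else 0)"
      using pointwise_err_bounds[of T "dt_eval h'" x] pointwise_err_bounds[of T "dt_eval h" x]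
        pointwise_err_cong[of "dt_eval h'" x "dt_eval h" T] by auto
  qed
  also have "\<dots> = (\<Sum>x\<in>cube n. pointwise_err T (dt_eval h) x) + real (card {x \<in> cube n. ?P x})"
    using finite_cube by (simp add: sum.distrib sum.inter_filter[symmetric])
  finally show ?thesis
    unfolding true_err_eq_sum by (simp add: add_divide_distrib[symmetric] divide_right_mono)
qed

section \<open>Approximating the Bayes predictor by a small deterministic tree\<close>

fun dt_graft :: "dt \<Rightarrow> (bool \<Rightarrow> dt) \<Rightarrow> dt" where
  "dt_graft (DLeaf b) f = f b"
| "dt_graft (DQuery i a b) f = DQuery i (dt_graft a f) (dt_graft b f)"

lemma dt_eval_graft: "dt_eval (dt_graft t f) x = dt_eval (f (dt_eval t x)) x"
  by (induction t) auto

lemma dt_wf_graft: "dt_wf n t \<Longrightarrow> (\<And>b. dt_wf n (f b)) \<Longrightarrow> dt_wf n (dt_graft t f)"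
  by (induction t) auto

lemma dt_leaves_graft: "(\<And>b. dt_leaves (f b) \<le> M) \<Longrightarrow> dt_leaves (dt_graft t f) \<le> dt_leaves t * M"
  by (induction t) (auto simp: add_mult_distrib intro: add_mono)

fun dt_threshold :: "real \<Rightarrow> nat \<Rightarrow> dt list \<Rightarrow> dt" where
  "dt_threshold th c [] = DLeaf (real c \<ge> th)"
| "dt_threshold th c (t # ts) = dt_graft t (\<lambda>b. dt_threshold th (c + (if b then 1 else 0)) ts)"

lemma dt_eval_threshold:
  "dt_eval (dt_threshold th c L) x = (real (c + length (filter (\<lambda>t. dt_eval t x) L)) \<ge> th)"
  by (induction L arbitrary: c) (auto simp: dt_eval_graft)

lemma dt_wf_threshold: "(\<forall>t\<in>set L. dt_wf n t) \<Longrightarrow> dt_wf n (dt_threshold th c L)"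
  by (induction L arbitrary: c) (auto intro!: dt_wf_graft)

lemma dt_leaves_threshold: "(\<forall>t\<in>set L. dt_leaves t \<le> s) \<Longrightarrow> dt_leaves (dt_threshold th c L) \<le> s ^ length L"
proof (induction L arbitrary: c)
  case Nil then show ?case by simp
next
  case (Cons t L)
  have "dt_leaves (dt_threshold th c (t # L)) \<le> dt_leaves t * s ^ length L"
    using Cons by (simp, intro dt_leaves_graft) auto
  also have "\<dots> \<le> s * s ^ length L" using Cons.prems by (intro mult_right_mono) auto
  finally show ?case by simp
qed

fun sdt_dt_pmf :: "sdt \<Rightarrow> dt pmf" where
  "sdt_dt_pmf (SLeaf b) = return_pmf (DLeaf b)"
| "sdt_dt_pmf (SQuery i a b) = bind_pmf (sdt_dt_pmf a) (\<lambda>ta. map_pmf (\<lambda>tb. DQuery i ta tb) (sdt_dt_pmf b))"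
| "sdt_dt_pmf (SCoin p a b) = bind_pmf (bernoulli_pmf p) (\<lambda>c. if c then sdt_dt_pmf a else sdt_dt_pmf b)"

lemma sdt_run_eq_map_sdt_dt_pmf: "sdt_run T x = map_pmf (\<lambda>t. dt_eval t x) (sdt_dt_pmf T)"
proof (induction T)
  case (SQuery i a b)
  show ?case
  proof (cases "x ! i")
    case True
    then show ?thesis using SQuery by (simp add: map_bind_pmf map_pmf_comp)
  next
    case False
    have "map_pmf (\<lambda>t. dt_eval t x) (sdt_dt_pmf (SQuery i a b))
          = bind_pmf (sdt_dt_pmf a) (\<lambda>ta. return_pmf (dt_eval ta x))"
      using False by (simp add: map_bind_pmf map_pmf_comp)
    also have "\<dots> = map_pmf (\<lambda>t. dt_eval t x) (sdt_dt_pmf a)" by (simp add: map_pmf_def)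
    finally show ?thesis using False SQuery by simp
  qed
qed (simp_all add: map_bind_pmf if_distrib cong: if_cong)

lemma set_sdt_dt_pmf:
  "t \<in> set_pmf (sdt_dt_pmf T) \<Longrightarrow> sdt_wf n T \<Longrightarrow> dt_leaves t \<le> sdt_size T \<and> dt_wf n t"
  by (induction T arbitrary: t) (fastforce split: if_splits)+

lemma length_filter_eq_sum_list: "real (length (filter P L)) = sum_list (map (\<lambda>y. if P y then 1 else 0) L)"
  by (induction L) auto

lemma expectation_indicator_True: "measure_pmf.expectation p (\<lambda>y. if y then 1 else 0 :: real) = pmf p True"
  by (subst integral_measure_pmf[of UNIV]) (auto simp: UNIV_bool)

lemma prob_threshold_ne_bayes:
  assumes "k \<ge> 1"
  shows "measure_pmf.prob (iid_pmf (sdt_dt_pmf T) k) {L. dt_eval (dt_threshold (real k / 2) 0 L) x \<noteq> sdt_bayes T x}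
         \<le> exp (- real k * (sdt_mu T x - 1/2)\<^sup>2 / 4)"
proof -
  define g where "g = (\<lambda>y::bool. if y then 1 else 0 :: real)"
  define \<mu> where "\<mu> = sdt_mu T x"
  have g01: "\<And>a. 0 \<le> g a \<and> g a \<le> 1" by (simp add: g_def)
  have Eg: "measure_pmf.expectation (sdt_run T x) g = \<mu>"
    unfolding g_def \<mu>_def sdt_mu_def by (rule expectation_indicator_True)
  define E where "E = {B. (real k / 2 \<le> sum_list (map g B)) \<noteq> sdt_bayes T x}"
  have "dt_eval (dt_threshold (real k / 2) 0 L) x = (real k / 2 \<le> sum_list (map g (map (\<lambda>t. dt_eval t x) L)))" for L
    by (simp add: dt_eval_threshold length_filter_eq_sum_list g_def o_def)
  then have "measure_pmf.prob (iid_pmf (sdt_dt_pmf T) k) {L. dt_eval (dt_threshold (real k / 2) 0 L) x \<noteq> sdt_bayes T x}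
      = measure_pmf.prob (map_pmf (map (\<lambda>t. dt_eval t x)) (iid_pmf (sdt_dt_pmf T) k)) E"
    by (simp add: E_def vimage_def)
  also have "map_pmf (map (\<lambda>t. dt_eval t x)) (iid_pmf (sdt_dt_pmf T) k) = iid_pmf (sdt_run T x) k"
    by (simp add: map_pmf_map_iid_pmf sdt_run_eq_map_sdt_dt_pmf)
  also have "measure_pmf.prob (iid_pmf (sdt_run T x) k) E \<le> exp (- real k * (\<mu> - 1/2)\<^sup>2 / 4)"
  proof (cases "\<mu> \<ge> 1/2")
    case True
    then have "E = {B. sum_list (map g B) < real k / 2}"
      by (auto simp: E_def sdt_bayes_def round_half_def \<mu>_def)
    also have "\<dots> \<subseteq> {B. sum_list (map g B) \<le> real k * (measure_pmf.expectation (sdt_run T x) g - (\<mu> - 1/2))}"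
      by (auto simp: Eg)
    finally have "measure_pmf.prob (iid_pmf (sdt_run T x) k) E
        \<le> measure_pmf.prob (iid_pmf (sdt_run T x) k)
             {B. sum_list (map g B) \<le> real k * (measure_pmf.expectation (sdt_run T x) g - (\<mu> - 1/2))}"
      by (intro measure_pmf.finite_measure_mono) auto
    also have "\<dots> \<le> exp (- real k * (\<mu> - 1/2)\<^sup>2 / 4)"
      using True sdt_mu_bounds[of T x] by (intro iid_sum_lower_tail g01) (auto simp: \<mu>_def)
    finally show ?thesis .
  next
    case False
    then have "E = {B. sum_list (map g B) \<ge> real k * (measure_pmf.expectation (sdt_run T x) g + (1/2 - \<mu>))}"
      by (auto simp: E_def Eg sdt_bayes_def round_half_def \<mu>_def algebra_simps)
    then have "measure_pmf.prob (iid_pmf (sdt_run T x) k) E \<le> exp (- real k * (1/2 - \<mu>)\<^sup>2 / 4)"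
      using False sdt_mu_bounds[of T x] by (simp only:) (intro iid_sum_upper_tail g01, auto simp: \<mu>_def)
    also have "(1/2 - \<mu>)\<^sup>2 = (\<mu> - 1/2)\<^sup>2" by (simp add: power2_commute)
    finally show ?thesis .
  qed
  finally show ?thesis by (simp add: \<mu>_def)
qed

lemma mult_exp_neg_square_le_1: "(u::real) * exp (- u\<^sup>2) \<le> 1"
proof -
  have "u \<le> 1 + u\<^sup>2" using zero_le_power2[of "u - 1/2"] by (simp add: power2_eq_square algebra_simps)
  also have "\<dots> \<le> exp (u\<^sup>2)" by (rule exp_ge_add_one_self)
  finally have "u * exp (- u\<^sup>2) \<le> exp (u\<^sup>2) * exp (- u\<^sup>2)" by (intro mult_right_mono) auto
  also have "\<dots> = 1" by (simp add: exp_add[symmetric])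
  finally show ?thesis .
qed

lemma mult_exp_neg_square_le_div_sqrt:
  assumes "k > 0" "l \<ge> 0"
  shows "2 * l * exp (- real k * l\<^sup>2 / 4) \<le> 4 / sqrt (real k)"
proof -
  define u where "u = l * sqrt (real k) / 2"
  have sk: "sqrt (real k) > 0" using assms by simp
  have "real k * l\<^sup>2 / 4 = u\<^sup>2" by (simp add: u_def power_mult_distrib power_divide)
  moreover have "2 * l = 4 * u / sqrt (real k)" unfolding u_def using sk by (simp add: field_simps)
  ultimately have "2 * l * exp (- real k * l\<^sup>2 / 4) = 4 / sqrt (real k) * (u * exp (- u\<^sup>2))"
    by simp
  also have "\<dots> \<le> 4 / sqrt (real k) * 1"
    using mult_exp_neg_square_le_1[of u] sk by (intro mult_left_mono) auto
  finally show ?thesis by simp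
qed

lemma expectation_threshold_excess_le:
  assumes "k \<ge> 1"
  shows "measure_pmf.expectation (iid_pmf (sdt_dt_pmf T) k)
           (\<lambda>L. pointwise_err T (dt_eval (dt_threshold (real k / 2) 0 L)) x - pointwise_err T (sdt_bayes T) x)
         \<le> 4 / sqrt (real k)"
proof -
  define E where "E = {L. dt_eval (dt_threshold (real k / 2) 0 L) x \<noteq> sdt_bayes T x}"
  define c where "c = \<bar>2 * sdt_mu T x - 1\<bar>"
  have "(\<lambda>L. pointwise_err T (dt_eval (dt_threshold (real k / 2) 0 L)) x - pointwise_err T (sdt_bayes T) x)
        = (\<lambda>L. c * indicator E L)"
    by (auto simp: pointwise_err_excess c_def E_def indicator_def)
  then have "measure_pmf.expectation (iid_pmf (sdt_dt_pmf T) k)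
           (\<lambda>L. pointwise_err T (dt_eval (dt_threshold (real k / 2) 0 L)) x - pointwise_err T (sdt_bayes T) x)
         = c * measure_pmf.prob (iid_pmf (sdt_dt_pmf T) k) E" by simp
  also have "\<dots> \<le> c * exp (- real k * (sdt_mu T x - 1/2)\<^sup>2 / 4)"
    unfolding E_def using prob_threshold_ne_bayes[OF assms] by (intro mult_left_mono) (auto simp: c_def)
  also have "c = 2 * \<bar>sdt_mu T x - 1/2\<bar>" unfolding c_def by (simp add: abs_if)
  also have "(sdt_mu T x - 1/2)\<^sup>2 = \<bar>sdt_mu T x - 1/2\<bar>\<^sup>2" by simp
  also have "2 * \<bar>sdt_mu T x - 1/2\<bar> * exp (- real k * \<bar>sdt_mu T x - 1/2\<bar>\<^sup>2 / 4) \<le> 4 / sqrt (real k)"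
    using assms by (intro mult_exp_neg_square_le_div_sqrt) auto
  finally show ?thesis .
qed

lemma exists_small_dt_near_opt:
  assumes wf: "sdt_wf n T" and k: "k \<ge> 1"
  obtains t where "dt_wf n t" "dt_leaves t \<le> sdt_size T ^ k" "true_err n T t \<le> sdt_opt n T + 4 / sqrt (real k)"
proof -
  let ?excess = "\<lambda>L x. pointwise_err T (dt_eval (dt_threshold (real k / 2) 0 L)) x - pointwise_err T (sdt_bayes T) x"
  define \<Phi> where "\<Phi> L = (\<Sum>x\<in>cube n. ?excess L x)" for L
  have excess_bound: "\<bar>?excess L x\<bar> \<le> 1" for L x
    using pointwise_err_bounds[of T "dt_eval (dt_threshold (real k / 2) 0 L)" x]
      pointwise_err_bounds[of T "sdt_bayes T" x] by linarith
  have "\<bar>\<Phi> L\<bar> \<le> real (card (cube n))" for L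
  proof -
    have "\<bar>\<Phi> L\<bar> \<le> (\<Sum>x\<in>cube n. \<bar>?excess L x\<bar>)" unfolding \<Phi>_def by (rule sum_abs)
    also have "\<dots> \<le> (\<Sum>x\<in>cube n. 1)" by (intro sum_mono excess_bound)
    finally show ?thesis by simp
  qed
  then obtain L where L: "L \<in> set_pmf (iid_pmf (sdt_dt_pmf T) k)"
    "\<Phi> L \<le> measure_pmf.expectation (iid_pmf (sdt_dt_pmf T) k) \<Phi>"
    using exists_in_set_pmf_le_expectation by blast
  have "measure_pmf.expectation (iid_pmf (sdt_dt_pmf T) k) \<Phi>
      = (\<Sum>x\<in>cube n. measure_pmf.expectation (iid_pmf (sdt_dt_pmf T) k) (\<lambda>L. ?excess L x))"
    unfolding \<Phi>_def
    by (rule Bochner_Integration.integral_sum) (rule integrable_measure_pmf_bounded[OF excess_bound])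
  also have "\<dots> \<le> (\<Sum>x\<in>cube n. 4 / sqrt (real k))"
    by (intro sum_mono expectation_threshold_excess_le k)
  finally have "\<Phi> L / 2 ^ n \<le> 4 / sqrt (real k)"
    using L(2) by (simp add: card_cube field_simps)
  have "length L = k" "\<forall>t\<in>set L. dt_leaves t \<le> sdt_size T \<and> dt_wf n t"
    using set_pmf_iid_pmf[OF L(1)] set_sdt_dt_pmf wf by blast+
  then have "dt_wf n (dt_threshold (real k / 2) 0 L)" "dt_leaves (dt_threshold (real k / 2) 0 L) \<le> sdt_size T ^ k"
    using dt_wf_threshold dt_leaves_threshold[of L "sdt_size T"] by auto
  moreover have "true_err n T (dt_threshold (real k / 2) 0 L) = sdt_opt n T + \<Phi> L / 2 ^ n"
    by (simp add: true_err_eq_sum sdt_opt_eq_sum \<Phi>_def sum_subtractf diff_divide_distrib)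
  ultimately show ?thesis using that \<open>\<Phi> L / 2 ^ n \<le> 4 / sqrt (real k)\<close> by simp
qed

section \<open>Uniform convergence over trees of bounded depth\<close>

definition zero_one_loss :: "(bool list \<Rightarrow> bool) \<Rightarrow> bool list \<times> bool \<Rightarrow> real" where
  "zero_one_loss f z = (if f (fst z) \<noteq> snd z then 1 else 0)"

lemma zero_one_loss_bounds: "0 \<le> zero_one_loss f z \<and> zero_one_loss f z \<le> 1"
  by (simp add: zero_one_loss_def)

lemma emp_err_mset_eq: "emp_err (mset L) h = sum_list (map (zero_one_loss (dt_eval h)) L) / real (length L)"
proof -
  have "size (filter_mset (\<lambda>(x, y). dt_eval h x \<noteq> y) (mset L)) = length (filter (\<lambda>(x, y). dt_eval h x \<noteq> y) L)"
    by (simp flip: mset_filter)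
  moreover have "real (length (filter (\<lambda>(x, y). dt_eval h x \<noteq> y) L)) = sum_list (map (zero_one_loss (dt_eval h)) L)"
    unfolding length_filter_eq_sum_list zero_one_loss_def by (induction L) auto
  ultimately show ?thesis by (simp add: emp_err_def)
qed

lemma expectation_zero_one_loss:
  "measure_pmf.expectation (example_pmf n T) (zero_one_loss f) = (\<Sum>x\<in>cube n. pointwise_err T f x) / 2 ^ n"
proof -
  have "zero_one_loss f = indicator {(x, y). f x \<noteq> y}"
    by (auto simp: zero_one_loss_def indicator_def fun_eq_iff)
  then show ?thesis by (simp add: prob_example_pmf_mispredict[symmetric])
qed

lemma expectation_zero_one_loss_cong:
  "(\<And>x. x \<in> cube n \<Longrightarrow> f x = f' x) \<Longrightarrow>
   measure_pmf.expectation (example_pmf n T) (zero_one_loss f) = measure_pmf.expectation (example_pmf n T) (zero_one_loss f')"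
  unfolding expectation_zero_one_loss by (intro arg_cong[where f="\<lambda>a. a / 2 ^ n"] sum.cong refl pointwise_err_cong) auto

lemma true_err_eq_expectation: "true_err n T h = measure_pmf.expectation (example_pmf n T) (zero_one_loss (dt_eval h))"
  by (simp add: expectation_zero_one_loss true_err_eq_sum)

lemma set_example_pmf: "z \<in> set_pmf (example_pmf n T) \<Longrightarrow> fst z \<in> cube n"
  using finite_cube cube_nonempty by (auto simp: example_pmf_def)

lemma add_2_le_power_2: "n \<ge> 2 \<Longrightarrow> n + 2 \<le> (2::nat) ^ n"
  by (induction n rule: dec_induct) simp_all

lemma power_2_le_exp: "(2::real) ^ n \<le> exp (real n)"
proof -
  have "(2::real) ^ n \<le> exp 1 ^ n"
    using exp_ge_add_one_self[of 1] by (intro power_mono) auto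
  then show ?thesis by (simp add: exp_of_nat_mult[symmetric])
qed

lemma mult_power_2_le_power:
  fixes n D :: nat
  assumes "2 \<le> n" "1 \<le> D"
  shows "n * 2 ^ (D + 1) \<le> 2 * n ^ (2 * D)"
proof -
  have "(2::nat) ^ D \<le> n ^ D" using assms by (intro power_mono) auto
  moreover have "n \<le> n ^ D" using assms by (simp add: self_le_power)
  ultimately have "2 * (n * 2 ^ D) \<le> 2 * (n ^ D * n ^ D)" by (intro mult_left_mono mult_mono) auto
  then show ?thesis by (simp add: power_add[symmetric] mult_2 mult.left_commute)
qed

lemma card_restrict_dt_eval_bounded_dts:
  assumes n: "n \<ge> 1" and D: "D \<ge> 1"
  defines "F \<equiv> (\<lambda>h. restrict (dt_eval h) (cube n)) ` bounded_dts n D"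
  shows "finite F" "real (card F) \<le> exp (2 * real n ^ (2 * D) + 2)"
proof -
  show "finite F" unfolding F_def using finite_card_bounded_dts by blast
  have "card F \<le> card (bounded_dts n D)"
    unfolding F_def using finite_card_bounded_dts by (intro card_image_le) blast
  then have by_trees: "card F \<le> (n + 2) ^ (2 ^ (D + 1) - 1)"
    using finite_card_bounded_dts[of n D] by linarith
  have "F \<subseteq> cube n \<rightarrow>\<^sub>E (UNIV :: bool set)" unfolding F_def by auto
  then have "card F \<le> card (cube n \<rightarrow>\<^sub>E (UNIV :: bool set))"
    using finite_cube by (intro card_mono) (auto intro: finite_PiE)
  then have by_functions: "card F \<le> 2 ^ (2 ^ n)" using finite_cube by (simp add: card_funcsetE card_cube)
  show "real (card F) \<le> exp (2 * real n ^ (2 * D) + 2)"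
  proof (cases "n = 1")
    case True
    \<comment> \<open>here the count of trees is too coarse, so count functions on the cube instead\<close>
    have "real (card F) \<le> 4" using by_functions True by simp
    also have "(4::real) \<le> exp 2" using power_2_le_exp[of 2] by simp
    also have "\<dots> \<le> exp (2 * real n ^ (2 * D) + 2)" by simp
    finally show ?thesis .
  next
    case False
    then have n2: "n \<ge> 2" using n by simp
    have "card F \<le> (n + 2) ^ (2 ^ (D + 1))"
      using by_trees power_increasing[of "2 ^ (D + 1) - 1" "2 ^ (D + 1)" "n + 2"] by linarith
    also have "\<dots> \<le> (2 ^ n) ^ (2 ^ (D + 1))" using add_2_le_power_2[OF n2] by (intro power_mono) auto
    finally have "real (card F) \<le> real ((2 ^ n) ^ (2 ^ (D + 1)))" by (rule of_nat_mono)
    also have "\<dots> = ((2::real) ^ n) ^ (2 ^ (D + 1))" by simp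
    also have "\<dots> \<le> exp (real n) ^ (2 ^ (D + 1))" using power_2_le_exp by (intro power_mono) auto
    also have "\<dots> = exp (real n * 2 ^ (D + 1))" by (simp add: exp_of_nat_mult[symmetric] mult.commute)
    also have "real n * 2 ^ (D + 1) \<le> 2 * real n ^ (2 * D)"
      using of_nat_mono[OF mult_power_2_le_power[OF n2 D], where 'a=real] by simp
    then have "exp (real n * 2 ^ (D + 1)) \<le> exp (2 * real n ^ (2 * D) + 2)" by simp
    finally show ?thesis .
  qed
qed

lemma prob_uniform_deviation_le:
  assumes n: "n \<ge> 1" and D: "D \<ge> 1" and m: "m > 0" and \<eta>: "0 \<le> \<eta>" "\<eta> \<le> 2"
  shows "measure_pmf.prob (iid_pmf (example_pmf n T) m)
           {L. \<exists>h\<in>bounded_dts n D. \<eta> < \<bar>emp_err (mset L) h - true_err n T h\<bar>}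
         \<le> exp (2 * real n ^ (2 * D) + 2) * (2 * exp (- real m * \<eta>\<^sup>2 / 4))"
proof -
  define F where "F = (\<lambda>h. restrict (dt_eval h) (cube n)) ` bounded_dts n D"
  define M where "M = iid_pmf (example_pmf n T) m"
  define Bad where "Bad f = {L. \<eta> < \<bar>sum_list (map (zero_one_loss f) L) / real m
                                 - measure_pmf.expectation (example_pmf n T) (zero_one_loss f)\<bar>}" for f
  note F = card_restrict_dt_eval_bounded_dts[OF n D, folded F_def]
  have "measure_pmf.prob M {L. \<exists>h\<in>bounded_dts n D. \<eta> < \<bar>emp_err (mset L) h - true_err n T h\<bar>}
       \<le> measure_pmf.prob M (\<Union>f\<in>F. Bad f)"
  proof (rule measure_pmf_prob_mono_on_support)
    fix L assume L: "L \<in> set_pmf M" and "L \<in> {L. \<exists>h\<in>bounded_dts n D. \<eta> < \<bar>emp_err (mset L) h - true_err n T h\<bar>}"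
    then obtain h where h: "h \<in> bounded_dts n D" "\<eta> < \<bar>emp_err (mset L) h - true_err n T h\<bar>" by auto
    have Ls: "length L = m" "set L \<subseteq> set_pmf (example_pmf n T)" using set_pmf_iid_pmf L unfolding M_def by auto
    define f where "f = restrict (dt_eval h) (cube n)"
    have same_losses: "map (zero_one_loss (dt_eval h)) L = map (zero_one_loss f) L"
      using Ls set_example_pmf by (auto simp: zero_one_loss_def f_def)
    have same_expectation: "measure_pmf.expectation (example_pmf n T) (zero_one_loss (dt_eval h))
                 = measure_pmf.expectation (example_pmf n T) (zero_one_loss f)"
      by (rule expectation_zero_one_loss_cong) (simp add: f_def)
    have "L \<in> Bad f"
      unfolding Bad_def mem_Collect_eq same_losses[symmetric] same_expectation[symmetric]
      using h(2) Ls by (simp add: emp_err_mset_eq true_err_eq_expectation)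
    moreover have "f \<in> F" using h(1) by (simp add: F_def f_def)
    ultimately show "L \<in> (\<Union>f\<in>F. Bad f)" by blast
  qed
  also have "\<dots> \<le> (\<Sum>f\<in>F. measure_pmf.prob M (Bad f))"
    using F by (intro measure_subadditive_finite) (auto simp: measure_pmf.emeasure_eq_measure)
  also have "\<dots> \<le> (\<Sum>f\<in>F. 2 * exp (- real m * \<eta>\<^sup>2 / 4))"
    unfolding M_def Bad_def using \<eta> m by (intro sum_mono iid_mean_deviation zero_one_loss_bounds) auto
  also have "\<dots> \<le> exp (2 * real n ^ (2 * D) + 2) * (2 * exp (- real m * \<eta>\<^sup>2 / 4))"
    using F by (simp add: mult_right_mono)
  finally show ?thesis by (simp add: M_def)
qed

lemma sdt_size_pos: "sdt_size T \<ge> 1"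
  by (induction T) auto

lemma find_set_no_vars: "find_set 0 X (Suc d) = {}"
  by (simp add: Let_def)

lemma ceiling_log2_div_bounds:
  fixes S \<epsilon> :: real
  assumes "S \<ge> 1" "0 < \<epsilon>" "\<epsilon> < 1"
  shows "S / 2 ^ nat \<lceil>log 2 (S / \<epsilon>)\<rceil> \<le> \<epsilon>" "nat \<lceil>log 2 (S / \<epsilon>)\<rceil> \<ge> 1"
proof -
  define D where "D = nat \<lceil>log 2 (S / \<epsilon>)\<rceil>"
  have pos: "S / \<epsilon> > 0" and gt1: "S / \<epsilon> > 1" using assms by (simp_all add: field_simps)
  have "2 powr log 2 (S / \<epsilon>) \<le> 2 powr real D"
    unfolding D_def by (intro powr_mono real_nat_ceiling_ge) auto
  then have "S / \<epsilon> \<le> 2 ^ D" using pos by (simp add: powr_realpow)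
  then show "S / 2 ^ D \<le> \<epsilon>" using assms by (simp add: field_simps)
  show "D \<ge> 1"
  proof (rule ccontr)
    assume "\<not> D \<ge> 1"
    then have "D = 0" by simp
    then show False using \<open>S / \<epsilon> \<le> 2 ^ D\<close> gt1 by simp
  qed
qed

lemma nat_ceiling_div_square_bounds:
  fixes \<epsilon> :: real
  assumes "0 < \<epsilon>" "\<epsilon> < 1"
  shows "4 / sqrt (real (nat \<lceil>16 / \<epsilon>\<^sup>2\<rceil>)) \<le> \<epsilon>" "real (nat \<lceil>16 / \<epsilon>\<^sup>2\<rceil>) \<le> 17 / \<epsilon>\<^sup>2"
    "nat \<lceil>16 / \<epsilon>\<^sup>2\<rceil> \<ge> 1"
proof -
  have p: "0 < \<epsilon>\<^sup>2" and "\<epsilon>\<^sup>2 < 1" using assms by (simp_all add: power_less_one_iff)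
  then have "1 < 1 / \<epsilon>\<^sup>2" by (simp add: field_simps)
  have "sqrt (16 / \<epsilon>\<^sup>2) \<le> sqrt (real (nat \<lceil>16 / \<epsilon>\<^sup>2\<rceil>))"
    by (intro real_sqrt_le_mono real_nat_ceiling_ge)
  moreover have "sqrt (16 / \<epsilon>\<^sup>2) = 4 / \<epsilon>" using assms by (simp add: real_sqrt_divide)
  ultimately show "4 / sqrt (real (nat \<lceil>16 / \<epsilon>\<^sup>2\<rceil>)) \<le> \<epsilon>"
    using assms by (simp add: field_simps)
  have "real (nat \<lceil>16 / \<epsilon>\<^sup>2\<rceil>) \<le> 16 / \<epsilon>\<^sup>2 + 1"
    using ceiling_correct[of "16 / \<epsilon>\<^sup>2"] p by simp
  also have "\<dots> \<le> 17 / \<epsilon>\<^sup>2" using \<open>1 < 1 / \<epsilon>\<^sup>2\<close> by (simp add: field_simps)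
  finally show "real (nat \<lceil>16 / \<epsilon>\<^sup>2\<rceil>) \<le> 17 / \<epsilon>\<^sup>2" .
  have "0 < 16 / \<epsilon>\<^sup>2" using p by simp
  then show "nat \<lceil>16 / \<epsilon>\<^sup>2\<rceil> \<ge> 1" by linarith
qed

lemma sample_size_bound:
  fixes N L \<epsilon> :: real
  assumes e: "0 < \<epsilon>" and N: "0 \<le> N" and L: "0 \<le> L"
    and m: "m \<ge> 96 * (1 + N + 1 / \<epsilon> + L) ^ 4"
  shows "m * \<epsilon>\<^sup>2 / 16 \<ge> 2 * N\<^sup>2 + 2 + ln 2 + L"
proof -
  define A where "A = 1 + N + 1 / \<epsilon> + L"
  have A1: "A \<ge> 1" and AN: "A \<ge> N" and AL: "A \<ge> L" and Ae: "A \<ge> 1/\<epsilon>"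
    using e N L by (auto simp: A_def)
  have "A * \<epsilon> \<ge> 1" using Ae e by (simp add: field_simps)
  then have Ae2: "A\<^sup>2 * \<epsilon>\<^sup>2 \<ge> 1" by (metis power_mult_distrib one_le_power)
  have "N\<^sup>2 \<le> A\<^sup>2" using AN N by (intro power_mono) auto
  moreover have "L \<le> A\<^sup>2" using AL A1 by (smt (verit) power2_eq_square mult_le_cancel_left1)
  moreover have "1 \<le> A\<^sup>2" using A1 by simp
  moreover have "ln 2 \<le> (1::real)" using ln_2_less_1 by simp
  ultimately have "2 * N\<^sup>2 + 2 + ln 2 + L \<le> 6 * A\<^sup>2 * 1" by linarith
  also have "\<dots> \<le> 6 * A\<^sup>2 * (A\<^sup>2 * \<epsilon>\<^sup>2)" using Ae2 by (intro mult_left_mono) auto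
  also have "\<dots> = 96 * A ^ 4 * \<epsilon>\<^sup>2 / 16" by (simp add: power2_eq_square power4_eq_xxxx)
  also have "\<dots> \<le> m * \<epsilon>\<^sup>2 / 16" using m by (intro divide_right_mono mult_right_mono) (auto simp: A_def)
  finally show ?thesis .
qed

lemma exists_shallow_dt_near_opt:
  assumes wf: "sdt_wf n T" and \<epsilon>: "0 < \<epsilon>" "\<epsilon> < 1/2"
    and D: "real (sdt_size T) powr (17 / \<epsilon>\<^sup>2) / 2 ^ D \<le> \<epsilon>"
  obtains h where "h \<in> bounded_dts n D" "true_err n T h \<le> sdt_opt n T + 2 * \<epsilon>"
proof -
  define k where "k = nat \<lceil>16 / \<epsilon>\<^sup>2\<rceil>"
  have s: "real (sdt_size T) \<ge> 1" using sdt_size_pos[of T] by simp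
  note k = nat_ceiling_div_square_bounds[of \<epsilon>, folded k_def]
  obtain t where t: "dt_wf n t" "dt_leaves t \<le> sdt_size T ^ k"
    "true_err n T t \<le> sdt_opt n T + 4 / sqrt (real k)"
    using exists_small_dt_near_opt[OF wf] k \<epsilon> by auto
  have "real (dt_leaves t) \<le> real (sdt_size T) ^ k" using t(2) by (metis of_nat_le_iff of_nat_power)
  also have "\<dots> = real (sdt_size T) powr real k" using s by (simp add: powr_realpow)
  also have "\<dots> \<le> real (sdt_size T) powr (17 / \<epsilon>\<^sup>2)" using k \<epsilon> s by (intro powr_mono) auto
  finally have "real (dt_leaves t) / 2 ^ D \<le> real (sdt_size T) powr (17 / \<epsilon>\<^sup>2) / 2 ^ D"
    by (intro divide_right_mono) auto
  then have leaves: "real (dt_leaves t) / 2 ^ D \<le> \<epsilon>" using D by linarith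
  obtain h where h: "h \<in> bounded_dts n D"
    "real (card {x \<in> cube n. dt_eval h x \<noteq> dt_eval t x}) \<le> real (dt_leaves t) * 2 ^ n / 2 ^ D"
    using exists_shallow_approximation[OF t(1)] by blast
  have "real (card {x \<in> cube n. dt_eval h x \<noteq> dt_eval t x}) / 2 ^ n \<le> real (dt_leaves t) / 2 ^ D"
    using h(2) by (simp add: field_simps)
  then have "true_err n T h \<le> true_err n T t + real (dt_leaves t) / 2 ^ D"
    using true_err_le_disagreement[of n T h t] by linarith
  then show ?thesis using that h(1) t(3) k \<epsilon> leaves by fastforce
qed

lemma find_set_true_err_le:
  assumes "n \<ge> 1" "Tstar \<in> find_set n X D" "h \<in> bounded_dts n D"
    and uniform: "\<forall>h\<in>bounded_dts n D. \<bar>emp_err X h - true_err n T h\<bar> \<le> \<eta>"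
  shows "true_err n T Tstar \<le> true_err n T h + 2 * \<eta>"
proof -
  have "mistakes X Tstar \<le> mistakes X h" using find_set_optimal assms(1-3) by blast
  then have "emp_err X Tstar \<le> emp_err X h" by (simp add: emp_err_eq_mistakes divide_right_mono)
  moreover have "Tstar \<in> bounded_dts n D" using assms(2) by (rule find_set_bounded_dts)
  then have "\<bar>emp_err X Tstar - true_err n T Tstar\<bar> \<le> \<eta>" "\<bar>emp_err X h - true_err n T h\<bar> \<le> \<eta>"
    using uniform assms(3) by auto
  ultimately show ?thesis by linarith
qed

lemma prob_nonuniform_sample_le:
  assumes n: "n \<ge> 1" and D: "D \<ge> 1" and \<epsilon>: "0 < \<epsilon>" "\<epsilon> < 1/2" and \<delta>: "0 < \<delta>" "\<delta> < 1"
    and m: "real m \<ge> 96 * (1 + real n ^ D + 1 / \<epsilon> + ln (1 / \<delta>)) ^ 4"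
  shows "measure_pmf.prob (iid_pmf (example_pmf n T) m)
           {L. \<exists>h\<in>bounded_dts n D. \<epsilon>/2 < \<bar>emp_err (mset L) h - true_err n T h\<bar>} \<le> \<delta>"
proof -
  define N where "N = real n ^ D"
  have "1 \<le> (1 + N + 1 / \<epsilon> + ln (1 / \<delta>)) ^ 4" using \<epsilon> \<delta> by (intro one_le_power) (auto simp: N_def)
  then have "m > 0" using m by (cases m) (auto simp: N_def)
  have mb: "real m * \<epsilon>\<^sup>2 / 16 \<ge> 2 * N\<^sup>2 + 2 + ln 2 + ln (1 / \<delta>)"
    using sample_size_bound[of \<epsilon> N "ln (1 / \<delta>)"] m \<epsilon> \<delta> by (simp add: N_def)
  have "measure_pmf.prob (iid_pmf (example_pmf n T) m)
          {L. \<exists>h\<in>bounded_dts n D. \<epsilon>/2 < \<bar>emp_err (mset L) h - true_err n T h\<bar>}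
        \<le> exp (2 * N\<^sup>2 + 2) * (2 * exp (- (real m * \<epsilon>\<^sup>2 / 16)))"
    using prob_uniform_deviation_le[OF n D \<open>m > 0\<close>, of "\<epsilon>/2" T] \<epsilon>
    by (simp add: N_def power_mult[symmetric] mult.commute power_divide)
  also have "\<dots> = 2 * exp (2 * N\<^sup>2 + 2 - real m * \<epsilon>\<^sup>2 / 16)"
    by (simp only: diff_conv_add_uminus exp_add)
  also have "\<dots> \<le> 2 * exp (- ln 2 - ln (1 / \<delta>))" using mb by simp
  also have "\<dots> = \<delta>" using \<delta> by (simp add: exp_diff exp_minus ln_div)
  finally show ?thesis .
qed

lemma find_set_err_le_whp:
  assumes wf: "sdt_wf n T" and \<epsilon>: "0 < \<epsilon>" "\<epsilon> < 1/2" and \<delta>: "0 < \<delta>" "\<delta> < 1"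
    and D: "D = nat \<lceil>log 2 (real (sdt_size T) powr (17 / \<epsilon>\<^sup>2) / \<epsilon>)\<rceil>"
    and m: "real m \<ge> 96 * (1 + real n ^ D + 1 / \<epsilon> + ln (1 / \<delta>)) ^ 4"
  shows "measure_pmf.prob (sample_pmf n T m)
           {X. \<forall>Tstar \<in> find_set n X D. true_err n T Tstar \<le> sdt_opt n T + 3 * \<epsilon>} \<ge> 1 - \<delta>"
proof -
  define G where "G = {X. \<forall>Tstar \<in> find_set n X D. true_err n T Tstar \<le> sdt_opt n T + 3 * \<epsilon>}"
  define B where "B = {L. \<exists>h\<in>bounded_dts n D. \<epsilon>/2 < \<bar>emp_err (mset L) h - true_err n T h\<bar>}"
  have "real (sdt_size T) powr (17 / \<epsilon>\<^sup>2) \<ge> 1"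
    using sdt_size_pos[of T] by (intro ge_one_powr_ge_zero) auto
  note D_bounds = ceiling_log2_div_bounds[OF this, of \<epsilon>, folded D]
  show ?thesis
  proof (cases "n = 0")
    case True
    \<comment> \<open>without variables Find has no output at positive depth, so the event is certain\<close>
    then have "G = UNIV" using D_bounds \<epsilon> by (cases D) (auto simp: G_def find_set_no_vars)
    then show ?thesis using \<delta> by (simp add: G_def[symmetric])
  next
    case False
    obtain h where h: "h \<in> bounded_dts n D" "true_err n T h \<le> sdt_opt n T + 2 * \<epsilon>"
      using exists_shallow_dt_near_opt[OF wf \<epsilon>] D_bounds \<epsilon> by auto
    have "UNIV - B \<subseteq> mset -` G"
      using find_set_true_err_le[of n _ _ D h T "\<epsilon>/2"] False h by (fastforce simp: B_def G_def)
    then have "measure_pmf.prob (iid_pmf (example_pmf n T) m) (UNIV - B)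
               \<le> measure_pmf.prob (sample_pmf n T m) G"
      by (auto simp: sample_pmf_def intro!: measure_pmf.finite_measure_mono)
    moreover have "measure_pmf.prob (iid_pmf (example_pmf n T) m) B \<le> \<delta>"
      unfolding B_def using prob_nonuniform_sample_le False D_bounds \<epsilon> \<delta> m by simp
    ultimately show ?thesis
      using measure_pmf.prob_compl[of B "iid_pmf (example_pmf n T) m"] by (simp add: G_def Compl_eq_Diff_UNIV)
  qed
qed

theorem lemma8:
  shows "\<exists>c::real. c > 0 \<and> (\<exists>(C::real) (k::nat).
    \<forall>(n::nat) (T::sdt) (s::nat) (\<epsilon>::real) (\<delta>::real) (m::nat).
      sdt_wf n T \<longrightarrow> sdt_size T = s \<longrightarrow> 0 < \<epsilon> \<longrightarrow> \<epsilon> < 1/2 \<longrightarrow> 0 < \<delta> \<longrightarrow> \<delta> < 1 \<longrightarrow>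
      (let S = real s powr (c / \<epsilon>\<^sup>2); D = nat \<lceil>log 2 (S / \<epsilon>)\<rceil> in
        real m \<ge> C * (1 + real n ^ D + 1 / \<epsilon> + ln (1 / \<delta>)) ^ k \<longrightarrow>
        measure_pmf.prob (sample_pmf n T m)
          {X. \<forall>Tstar \<in> find_set n X D. true_err n T Tstar \<le> sdt_opt n T + 3 * \<epsilon>}
        \<ge> 1 - \<delta>))"
proof (rule exI[of _ "17::real"], rule conjI[OF _ exI[of _ "96::real"]], simp,
       rule exI[of _ "4::nat"], intro allI impI)
  fix n s m :: nat and T :: sdt and \<epsilon> \<delta> :: real
  assume "sdt_wf n T" "sdt_size T = s" "0 < \<epsilon>" "\<epsilon> < 1/2" "0 < \<delta>" "\<delta> < 1"
  then show "let S = real s powr (17 / \<epsilon>\<^sup>2); D = nat \<lceil>log 2 (S / \<epsilon>)\<rceil> in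
        real m \<ge> 96 * (1 + real n ^ D + 1 / \<epsilon> + ln (1 / \<delta>)) ^ 4 \<longrightarrow>
        measure_pmf.prob (sample_pmf n T m)
          {X. \<forall>Tstar \<in> find_set n X D. true_err n T Tstar \<le> sdt_opt n T + 3 * \<epsilon>}
        \<ge> 1 - \<delta>"
    unfolding Let_def using find_set_err_le_whp by blast
qed

end
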